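(* Let $m\ge 1$. The Lie superalgebra $H_m$ is capable if and only if $m=1$.
   Context: All algebras are over a field $\mathbb{F}$ of characteristic $\neq 2,3$. $H_m$ is the Lie superalgebra with even basis $x_1,\dots,x_m$, odd basis $y_1,\dots,y_m,z$, and nonzero brackets $[x_j,y_j]=z$ ($1\le j\le m$). A Lie superalgebra $L$ is capable if $L\cong H/Z(H)$ for some Lie superalgebra $H$. *)

theory Defs
  imports Main
begin

record ('f, 'a) lsa =
  carr :: "'a set"
  evp  :: "'a set"
  oddp :: "'a set"
  zr   :: 'a
  ad   :: "'a \<Rightarrow> 'a \<Rightarrow> 'a"
  sm   :: "'f \<Rightarrow> 'a \<Rightarrow> 'a"
  br   :: "'a \<Rightarrow> 'a \<Rightarrow> 'a"

definition vector_space_on :: "('f::field, 'a) lsa \<Rightarrow> bool" where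
  "vector_space_on L \<longleftrightarrow>
     zr L \<in> carr L \<and>
     (\<forall>x\<in>carr L. \<forall>y\<in>carr L. ad L x y \<in> carr L) \<and>
     (\<forall>c. \<forall>x\<in>carr L. sm L c x \<in> carr L) \<and>
     (\<forall>x\<in>carr L. \<forall>y\<in>carr L. \<forall>z\<in>carr L. ad L (ad L x y) z = ad L x (ad L y z)) \<and>
     (\<forall>x\<in>carr L. \<forall>y\<in>carr L. ad L x y = ad L y x) \<and>
     (\<forall>x\<in>carr L. ad L (zr L) x = x) \<and>
     (\<forall>x\<in>carr L. \<exists>y\<in>carr L. ad L x y = zr L) \<and>
     (\<forall>c. \<forall>x\<in>carr L. \<forall>y\<in>carr L. sm L c (ad L x y) = ad L (sm L c x) (sm L c y)) \<and>
     (\<forall>c d. \<forall>x\<in>carr L. sm L (c + d) x = ad L (sm L c x) (sm L d x)) \<and>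
     (\<forall>c d. \<forall>x\<in>carr L. sm L (c * d) x = sm L c (sm L d x)) \<and>
     (\<forall>x\<in>carr L. sm L 1 x = x)"

definition subspace_of :: "'a set \<Rightarrow> ('f::field, 'a) lsa \<Rightarrow> bool" where
  "subspace_of S L \<longleftrightarrow> S \<subseteq> carr L \<and> zr L \<in> S \<and>
     (\<forall>x\<in>S. \<forall>y\<in>S. ad L x y \<in> S) \<and> (\<forall>c. \<forall>x\<in>S. sm L c x \<in> S)"

definition hom :: "('f, 'a) lsa \<Rightarrow> 'a \<Rightarrow> bool \<Rightarrow> bool" where
  "hom L x d \<longleftrightarrow> (if d then x \<in> oddp L else x \<in> evp L)"

text \<open>The sign (-1)^(|x||y|).\<close>
definition sgn2 :: "bool \<Rightarrow> bool \<Rightarrow> 'f::field" where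
  "sgn2 d e = (if d \<and> e then - 1 else 1)"

definition lie_superalgebra :: "('f::field, 'a) lsa \<Rightarrow> bool" where
  "lie_superalgebra L \<longleftrightarrow>
     vector_space_on L \<and>
     subspace_of (evp L) L \<and> subspace_of (oddp L) L \<and>
     carr L = {ad L a b | a b. a \<in> evp L \<and> b \<in> oddp L} \<and>
     evp L \<inter> oddp L = {zr L} \<and>
     (\<forall>x\<in>carr L. \<forall>y\<in>carr L. br L x y \<in> carr L) \<and>
     (\<forall>c. \<forall>x\<in>carr L. \<forall>y\<in>carr L. \<forall>z\<in>carr L.
        br L (ad L (sm L c x) y) z = ad L (sm L c (br L x z)) (br L y z) \<and>
        br L z (ad L (sm L c x) y) = ad L (sm L c (br L z x)) (br L z y)) \<and>
     (\<forall>x y d e. hom L x d \<longrightarrow> hom L y e \<longrightarrow> hom L (br L x y) (d \<noteq> e)) \<and>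
     (\<forall>x y d e. hom L x d \<longrightarrow> hom L y e \<longrightarrow>
        br L x y = sm L (- sgn2 d e) (br L y x)) \<and>
     (\<forall>x y z d e f. hom L x d \<longrightarrow> hom L y e \<longrightarrow> hom L z f \<longrightarrow>
        ad L (ad L (sm L (sgn2 d f) (br L x (br L y z)))
                   (sm L (sgn2 e d) (br L y (br L z x))))
             (sm L (sgn2 f e) (br L z (br L x y))) = zr L)"

definition center :: "('f, 'a) lsa \<Rightarrow> 'a set" where
  "center L = {z \<in> carr L. \<forall>x\<in>carr L. br L z x = zr L}"

definition coset :: "('f, 'a) lsa \<Rightarrow> 'a set \<Rightarrow> 'a \<Rightarrow> 'a set" where
  "coset L I x = {ad L x i | i. i \<in> I}"

definition quot :: "('f, 'a) lsa \<Rightarrow> 'a set \<Rightarrow> ('f, 'a set) lsa" where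
  "quot L I = \<lparr> carr = coset L I ` carr L,
               evp = coset L I ` evp L,
               oddp = coset L I ` oddp L,
               zr = I,
               ad = (\<lambda>A B. {ad L a b | a b. a \<in> A \<and> b \<in> B}),
               sm = (\<lambda>c A. {ad L (sm L c a) i | a i. a \<in> A \<and> i \<in> I}),
               br = (\<lambda>A B. {ad L (br L a b) i | a b i. a \<in> A \<and> b \<in> B \<and> i \<in> I}) \<rparr>"

definition lsa_iso :: "('f, 'a) lsa \<Rightarrow> ('f, 'b) lsa \<Rightarrow> ('a \<Rightarrow> 'b) \<Rightarrow> bool" where
  "lsa_iso L M f \<longleftrightarrow> bij_betw f (carr L) (carr M) \<and>
     f ` evp L = evp M \<and> f ` oddp L = oddp M \<and>
     (\<forall>x\<in>carr L. \<forall>y\<in>carr L. f (ad L x y) = ad M (f x) (f y) \<and>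
                            f (br L x y) = br M (f x) (f y)) \<and>
     (\<forall>c. \<forall>x\<in>carr L. f (sm L c x) = sm M c (f x))"

text \<open>L is capable (with the witness H living on carrier type 'h):
  L is isomorphic to H/Z(H) for some Lie superalgebra H.\<close>
definition capable_in :: "'h itself \<Rightarrow> ('f::field, 'a) lsa \<Rightarrow> bool" where
  "capable_in T L \<longleftrightarrow> (\<exists>(H :: ('f, 'h) lsa) f.
      lie_superalgebra H \<and> lsa_iso (quot H (center H)) L f)"

text \<open>The Heisenberg Lie superalgebra H_m: an element (a, b, c) stands for
  sum_j a_j x_j + sum_j b_j y_j + c z (j = 1..m); x_j even, y_j, z odd,
  with [x_j, y_j] = z (and hence [y_j, x_j] = -z), all other brackets of
  basis elements zero.\<close>
definition heis :: "nat \<Rightarrow> ('f::field, (nat \<Rightarrow> 'f) \<times> (nat \<Rightarrow> 'f) \<times> 'f) lsa" where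
  "heis m = \<lparr> carr = {(a, b, c). \<forall>j. (j < 1 \<or> m < j) \<longrightarrow> a j = 0 \<and> b j = 0},
              evp = {(a, b, c). (\<forall>j. (j < 1 \<or> m < j) \<longrightarrow> a j = 0) \<and> (\<forall>j. b j = 0) \<and> c = 0},
              oddp = {(a, b, c). (\<forall>j. a j = 0) \<and> (\<forall>j. (j < 1 \<or> m < j) \<longrightarrow> b j = 0)},
              zr = ((\<lambda>_. 0), (\<lambda>_. 0), 0),
              ad = (\<lambda>(a, b, c) (a', b', c'). ((\<lambda>j. a j + a' j), (\<lambda>j. b j + b' j), c + c')),
              sm = (\<lambda>k (a, b, c). ((\<lambda>j. k * a j), (\<lambda>j. k * b j), k * c)),
              br = (\<lambda>(a, b, c) (a', b', c').
                      ((\<lambda>_. 0), (\<lambda>_. 0), (\<Sum>j = 1..m. a j * b' j - b j * a' j))) \<rparr>"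

end

theory Submission
  imports Defs
begin

text \<open>
  A superalgebra M is capable iff there is a Lie superalgebra L with an epimorphism L \<rightarrow> M
  whose kernel is the centre Z(L). Suppose \<psi> : L \<rightarrow> H_m is one, with m \<ge> 2, and lift the
  basis vectors x_i, y_i to homogeneous x_i', y_i'. Brackets of lifts whose images commute are
  central, so the Jacobi identity shows that w = [x_2', y_2'] commutes with x_1' and y_1'. As w is
  a preimage of z and every bracket maps into the line of z, every bracket is a multiple of w
  modulo Z(L); hence x_1' and y_1' annihilate all brackets, and the Jacobi identity for t, x_1',
  y_1' makes [x_1', y_1'] central, although it maps to z \<noteq> 0. For m = 1, dividing the
  superalgebra spanned by x, y, z, w with [x, y] = z and [x, z] = w by its centre, the line
  of w, gives H_1. Neither argument uses the hypotheses on the characteristic.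
\<close>

section \<open>Vector spaces on an explicit carrier\<close>

locale lsa_vector_space =
  fixes V :: "('f::field, 'a) lsa"
  assumes vector_space: "vector_space_on V"
begin

lemma zr_closed [simp]: "zr V \<in> carr V"
  and ad_closed [simp]: "x \<in> carr V \<Longrightarrow> y \<in> carr V \<Longrightarrow> ad V x y \<in> carr V"
  and sm_closed [simp]: "x \<in> carr V \<Longrightarrow> sm V c x \<in> carr V"
  and ad_assoc: "x \<in> carr V \<Longrightarrow> y \<in> carr V \<Longrightarrow> z \<in> carr V \<Longrightarrow>
                 ad V (ad V x y) z = ad V x (ad V y z)"
  and ad_commute: "x \<in> carr V \<Longrightarrow> y \<in> carr V \<Longrightarrow> ad V x y = ad V y x"
  and ad_zero_left [simp]: "x \<in> carr V \<Longrightarrow> ad V (zr V) x = x"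
  and ad_inverse_ex: "x \<in> carr V \<Longrightarrow> \<exists>y\<in>carr V. ad V x y = zr V"
  and sm_ad: "x \<in> carr V \<Longrightarrow> y \<in> carr V \<Longrightarrow> sm V c (ad V x y) = ad V (sm V c x) (sm V c y)"
  and sm_plus: "x \<in> carr V \<Longrightarrow> sm V (c + d) x = ad V (sm V c x) (sm V d x)"
  and sm_mult: "x \<in> carr V \<Longrightarrow> sm V (c * d) x = sm V c (sm V d x)"
  and sm_one [simp]: "x \<in> carr V \<Longrightarrow> sm V 1 x = x"
  using vector_space unfolding vector_space_on_def by ((elim conjE)?, meson)+

lemma ad_zero_right [simp]: "x \<in> carr V \<Longrightarrow> ad V x (zr V) = x"
  using ad_commute[of x "zr V"] by simp

lemma ad_left_commute:
  "x \<in> carr V \<Longrightarrow> y \<in> carr V \<Longrightarrow> z \<in> carr V \<Longrightarrow> ad V x (ad V y z) = ad V y (ad V x z)"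
  by (simp flip: ad_assoc add: ad_commute[of x y])

lemma ad_left_cancel:
  assumes x: "x \<in> carr V" and y: "y \<in> carr V" and z: "z \<in> carr V"
    and eq: "ad V x y = ad V x z"
  shows "y = z"
proof -
  obtain n where n: "n \<in> carr V" "ad V x n = zr V"
    using ad_inverse_ex[OF x] by blast
  have "y = ad V (ad V x n) y" using n y by simp
  also have "\<dots> = ad V n (ad V x y)"
    by (metis ad_assoc[OF n(1) x y] ad_commute[OF n(1) x])
  also have "\<dots> = ad V (ad V x n) z"
    by (metis eq ad_assoc[OF n(1) x z] ad_commute[OF n(1) x])
  finally show ?thesis using n z by simp
qed

lemma ad_self_eq_imp_zero: "x \<in> carr V \<Longrightarrow> ad V x x = x \<Longrightarrow> x = zr V"
  by (rule ad_left_cancel[of x]) auto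

lemma sm_zero_right [simp]: "sm V c (zr V) = zr V"
  by (rule ad_self_eq_imp_zero) (simp_all flip: sm_ad)

lemma sm_zero_left [simp]: "x \<in> carr V \<Longrightarrow> sm V 0 x = zr V"
  by (rule ad_self_eq_imp_zero) (simp_all flip: sm_plus)

lemma ad_neg_right [simp]: "x \<in> carr V \<Longrightarrow> ad V x (sm V (- 1) x) = zr V"
  using sm_plus[of x 1 "- 1"] by simp

lemma ad_neg_cancel_left [simp]:
  "x \<in> carr V \<Longrightarrow> y \<in> carr V \<Longrightarrow> ad V x (ad V (sm V (- 1) x) y) = y"
  using ad_assoc[of x "sm V (- 1) x" y] by simp

lemma ad_eq_zero_imp_neg:
  assumes "x \<in> carr V" "y \<in> carr V" "ad V x y = zr V"
  shows "x = sm V (- 1) y"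
proof -
  have "x = ad V x (ad V y (sm V (- 1) y))" using assms by simp
  also have "\<dots> = ad V (ad V x y) (sm V (- 1) y)"
    using assms by (intro ad_assoc[symmetric]) simp_all
  also have "\<dots> = sm V (- 1) y" using assms by simp
  finally show ?thesis .
qed

lemma sm_eq_zero_iff: "x \<in> carr V \<Longrightarrow> sm V c x = zr V \<longleftrightarrow> c = 0 \<or> x = zr V"
proof (cases "c = 0")
  case False
  assume x: "x \<in> carr V"
  have "x = sm V (inverse c) (sm V c x)" using False x by (simp flip: sm_mult)
  then show ?thesis using False x by auto
qed simp

end

section \<open>Lie superalgebras, their centre and central quotients\<close>

lemma sgn2_nonzero [simp]: "sgn2 d e \<noteq> (0::'f::field)"
  by (simp add: sgn2_def)

locale lie_sa =
  fixes L :: "('f::field, 'a) lsa"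
  assumes lsa: "lie_superalgebra L"

sublocale lie_sa \<subseteq> lsa_vector_space L
  using lsa unfolding lie_superalgebra_def by unfold_locales (elim conjE)

context lie_sa
begin

lemma evp_subspace: "subspace_of (evp L) L"
  and oddp_subspace: "subspace_of (oddp L) L"
  and carr_eq_evp_oddp: "carr L = {ad L a b |a b. a \<in> evp L \<and> b \<in> oddp L}"
  and evp_inter_oddp: "evp L \<inter> oddp L = {zr L}"
  and br_closed [simp]: "x \<in> carr L \<Longrightarrow> y \<in> carr L \<Longrightarrow> br L x y \<in> carr L"
  and br_linear_left: "x \<in> carr L \<Longrightarrow> y \<in> carr L \<Longrightarrow> z \<in> carr L \<Longrightarrow>
        br L (ad L (sm L c x) y) z = ad L (sm L c (br L x z)) (br L y z)"
  and br_linear_right: "x \<in> carr L \<Longrightarrow> y \<in> carr L \<Longrightarrow> z \<in> carr L \<Longrightarrow>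
        br L z (ad L (sm L c x) y) = ad L (sm L c (br L z x)) (br L z y)"
  and hom_br: "hom L x d \<Longrightarrow> hom L y e \<Longrightarrow> hom L (br L x y) (d \<noteq> e)"
  and br_skew: "hom L x d \<Longrightarrow> hom L y e \<Longrightarrow> br L x y = sm L (- sgn2 d e) (br L y x)"
  and jacobi: "hom L x d \<Longrightarrow> hom L y e \<Longrightarrow> hom L z f \<Longrightarrow>
        ad L (ad L (sm L (sgn2 d f) (br L x (br L y z))) (sm L (sgn2 e d) (br L y (br L z x))))
             (sm L (sgn2 f e) (br L z (br L x y))) = zr L"
  using lsa unfolding lie_superalgebra_def by ((elim conjE)?, meson)+

lemma evp_carr: "x \<in> evp L \<Longrightarrow> x \<in> carr L"
  and oddp_carr: "x \<in> oddp L \<Longrightarrow> x \<in> carr L"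
  and sm_evp: "x \<in> evp L \<Longrightarrow> sm L c x \<in> evp L"
  and sm_oddp: "x \<in> oddp L \<Longrightarrow> sm L c x \<in> oddp L"
  using evp_subspace oddp_subspace unfolding subspace_of_def by blast+

lemma hom_carr: "hom L x d \<Longrightarrow> x \<in> carr L"
  unfolding hom_def by (cases d) (auto intro: evp_carr oddp_carr)

lemma hom_evp: "x \<in> evp L \<Longrightarrow> hom L x False"
  and hom_oddp: "x \<in> oddp L \<Longrightarrow> hom L x True"
  by (simp_all add: hom_def)

lemma carr_decompE:
  assumes "x \<in> carr L"
  obtains a b where "a \<in> evp L" "b \<in> oddp L" "x = ad L a b"
  using assms carr_eq_evp_oddp by blast

lemma hom_ad_eq_zero:
  assumes a: "hom L a d" and b: "hom L b e" and de: "d \<noteq> e" and ab: "ad L a b = zr L"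
  shows "a = zr L" "b = zr L"
proof -
  have "a = sm L (- 1) b"
    using a b ab by (intro ad_eq_zero_imp_neg) (auto intro: hom_carr)
  then have "hom L a e"
    using b unfolding hom_def by (auto intro: sm_evp sm_oddp)
  then show a0: "a = zr L"
    using a de evp_inter_oddp unfolding hom_def by (cases d; cases e) auto
  show "b = zr L" using ab a0 b by (simp add: hom_carr)
qed

lemma br_ad_left: "x \<in> carr L \<Longrightarrow> y \<in> carr L \<Longrightarrow> z \<in> carr L \<Longrightarrow>
    br L (ad L x y) z = ad L (br L x z) (br L y z)"
  using br_linear_left[of x y z 1] by simp

lemma br_ad_right: "x \<in> carr L \<Longrightarrow> y \<in> carr L \<Longrightarrow> z \<in> carr L \<Longrightarrow>
    br L z (ad L x y) = ad L (br L z x) (br L z y)"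
  using br_linear_right[of x y z 1] by simp

lemma br_zero_left [simp]: "x \<in> carr L \<Longrightarrow> br L (zr L) x = zr L"
  using br_ad_left[of "zr L" "zr L" x] by (intro ad_self_eq_imp_zero) auto

lemma br_zero_right [simp]: "x \<in> carr L \<Longrightarrow> br L x (zr L) = zr L"
  using br_ad_right[of "zr L" "zr L" x] by (intro ad_self_eq_imp_zero) auto

lemma br_sm_left: "x \<in> carr L \<Longrightarrow> z \<in> carr L \<Longrightarrow> br L (sm L c x) z = sm L c (br L x z)"
  using br_linear_left[of x "zr L" z c] by simp

lemma center_carr: "z \<in> center L \<Longrightarrow> z \<in> carr L"
  and br_center_left: "z \<in> center L \<Longrightarrow> x \<in> carr L \<Longrightarrow> br L z x = zr L"
  by (simp_all add: center_def)

lemma subspace_center: "subspace_of (center L) L"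
  unfolding subspace_of_def center_def by (auto simp: br_ad_left br_sm_left)

lemma br_hom_center:
  assumes h: "hom L h d" and z: "z \<in> center L"
  shows "br L h z = zr L"
proof -
  have hc: "h \<in> carr L" using h by (rule hom_carr)
  obtain a b where a: "a \<in> evp L" and b: "b \<in> oddp L" and zab: "z = ad L a b"
    using z center_carr carr_decompE by metis
  have ac: "a \<in> carr L" and bc: "b \<in> carr L" using a b by (auto intro: evp_carr oddp_carr)
  have "ad L (br L a h) (br L b h) = br L z h"
    using ac bc hc zab by (simp add: br_ad_left)
  also have "\<dots> = zr L" using z hc by (rule br_center_left)
  finally have "br L a h = zr L \<and> br L b h = zr L"
    using hom_ad_eq_zero[OF hom_br[OF hom_evp[OF a] h] hom_br[OF hom_oddp[OF b] h]] by auto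
  moreover have "br L h z = ad L (br L h a) (br L h b)"
    using ac bc hc zab by (simp add: br_ad_right)
  ultimately show ?thesis
    using br_skew[OF h hom_evp[OF a]] br_skew[OF h hom_oddp[OF b]] by simp
qed

text \<open>Skew-symmetry makes the left-sided definition of the centre two-sided.\<close>
lemma br_center_right:
  assumes x: "x \<in> carr L" and z: "z \<in> center L"
  shows "br L x z = zr L"
proof -
  obtain a b where a: "a \<in> evp L" and b: "b \<in> oddp L" and xab: "x = ad L a b"
    using x carr_decompE by metis
  then show ?thesis
    using br_hom_center[OF hom_evp[OF a] z] br_hom_center[OF hom_oddp[OF b] z] z
    by (simp add: br_ad_left evp_carr oddp_carr center_carr)
qed

lemma center_if_br_hom_zero:
  assumes w: "hom L w d" and kills: "\<And>t e. hom L t e \<Longrightarrow> br L t w = zr L"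
  shows "w \<in> center L"
  unfolding center_def
proof (intro CollectI conjI ballI)
  show wc: "w \<in> carr L" using w by (rule hom_carr)
  fix x assume "x \<in> carr L"
  then obtain a b where a: "a \<in> evp L" and b: "b \<in> oddp L" and xab: "x = ad L a b"
    using carr_decompE by metis
  have "br L w x = ad L (br L w a) (br L w b)"
    using wc a b xab by (simp add: br_ad_right evp_carr oddp_carr)
  then show "br L w x = zr L"
    using br_skew[OF w hom_evp[OF a]] br_skew[OF w hom_oddp[OF b]]
      kills[OF hom_evp[OF a]] kills[OF hom_oddp[OF b]] by simp
qed

lemma coset_self: "subspace_of I L \<Longrightarrow> g \<in> carr L \<Longrightarrow> g \<in> coset L I g"
  unfolding coset_def subspace_of_def by (auto intro!: exI[of _ "zr L"])

lemma coset_zero: "subspace_of I L \<Longrightarrow> coset L I (zr L) = I"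
  unfolding coset_def subspace_of_def by (auto, metis ad_zero_left subsetD)

lemma coset_eq_if_mem:
  assumes I: "subspace_of I L" and g: "g \<in> carr L" and h: "h \<in> coset L I g"
  shows "coset L I h = coset L I g"
proof -
  have Ic: "\<And>i. i \<in> I \<Longrightarrow> i \<in> carr L" and
    Iad: "\<And>i j. i \<in> I \<Longrightarrow> j \<in> I \<Longrightarrow> ad L i j \<in> I" and
    Ism: "\<And>c i. i \<in> I \<Longrightarrow> sm L c i \<in> I"
    using I unfolding subspace_of_def by blast+
  obtain i0 where i0: "i0 \<in> I" and hg: "h = ad L g i0"
    using h unfolding coset_def by blast
  have "ad L g j = ad L h (ad L (sm L (- 1) i0) j)" if "j \<in> I" for j
    using g i0 that Ic by (simp add: hg ad_assoc)
  then have "coset L I g \<subseteq> coset L I h"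
    unfolding coset_def using i0 by (blast intro: Iad Ism)
  moreover have "coset L I h \<subseteq> coset L I g"
    unfolding coset_def using g i0 Ic by (auto simp: hg ad_assoc intro!: Iad)
  ultimately show ?thesis by blast
qed

lemma coset_eq_zero_iff:
  assumes I: "subspace_of I L" and u: "u \<in> carr L"
  shows "coset L I u = I \<longleftrightarrow> u \<in> I"
  using coset_self[OF I u] coset_eq_if_mem[OF I zr_closed, of u] coset_zero[OF I] u by auto

lemma quot_ad_coset:
  assumes I: "subspace_of I L" and g: "g \<in> carr L" and h: "h \<in> carr L"
  shows "ad (quot L I) (coset L I g) (coset L I h) = coset L I (ad L g h)"
proof (intro set_eqI iffI)
  have Ic: "\<And>i. i \<in> I \<Longrightarrow> i \<in> carr L" and
    Iad: "\<And>i j. i \<in> I \<Longrightarrow> j \<in> I \<Longrightarrow> ad L i j \<in> I"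
    using I unfolding subspace_of_def by blast+
  fix x assume "x \<in> ad (quot L I) (coset L I g) (coset L I h)"
  then obtain i j where "i \<in> I" "j \<in> I" and "x = ad L (ad L g i) (ad L h j)"
    unfolding quot_def coset_def by auto
  moreover have "ad L (ad L g i) (ad L h j) = ad L (ad L g h) (ad L i j)" if "i \<in> I" "j \<in> I" for i j
    using g h Ic[OF that(1)] Ic[OF that(2)] by (simp add: ad_assoc ad_left_commute)
  ultimately show "x \<in> coset L I (ad L g h)"
    unfolding coset_def by (auto intro: Iad)
next
  fix x assume "x \<in> coset L I (ad L g h)"
  then obtain i where i: "i \<in> I" and x: "x = ad L (ad L g h) i"
    unfolding coset_def by blast
  have "x = ad L (ad L g i) h"
    using g h i I unfolding x subspace_of_def by (auto simp: ad_assoc ad_commute[of h])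
  then show "x \<in> ad (quot L I) (coset L I g) (coset L I h)"
    unfolding quot_def using i coset_self[OF I h] unfolding coset_def by auto
qed

lemma quot_sm_coset:
  assumes I: "subspace_of I L" and g: "g \<in> carr L"
  shows "sm (quot L I) c (coset L I g) = coset L I (sm L c g)"
proof (intro set_eqI iffI)
  have Ic: "\<And>i. i \<in> I \<Longrightarrow> i \<in> carr L" and
    Iad: "\<And>i j. i \<in> I \<Longrightarrow> j \<in> I \<Longrightarrow> ad L i j \<in> I" and
    Ism: "\<And>c i. i \<in> I \<Longrightarrow> sm L c i \<in> I"
    using I unfolding subspace_of_def by blast+
  fix x assume "x \<in> sm (quot L I) c (coset L I g)"
  then obtain i j where ij: "i \<in> I" "j \<in> I" and "x = ad L (sm L c (ad L g i)) j"
    unfolding quot_def coset_def by auto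
  then have "x = ad L (sm L c g) (ad L (sm L c i) j)"
    using g Ic by (simp add: sm_ad ad_assoc)
  then show "x \<in> coset L I (sm L c g)"
    unfolding coset_def using ij by (auto intro: Iad Ism)
next
  fix x assume "x \<in> coset L I (sm L c g)"
  then show "x \<in> sm (quot L I) c (coset L I g)"
    unfolding quot_def using coset_self[OF I g] unfolding coset_def by auto
qed

lemma quot_br_coset:
  assumes I: "subspace_of I L" and central: "I \<subseteq> center L"
    and g: "g \<in> carr L" and h: "h \<in> carr L"
  shows "br (quot L I) (coset L I g) (coset L I h) = coset L I (br L g h)"
proof (intro set_eqI iffI)
  have br_shift: "br L (ad L g i) (ad L h j) = br L g h" if "i \<in> I" "j \<in> I" for i j
  proof -
    have i: "i \<in> center L" and j: "j \<in> center L" using that central by auto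
    then show ?thesis
      using g h br_center_right[OF g j] br_center_left[OF i] br_center_left[OF i h]
      by (simp add: center_carr br_ad_left br_ad_right)
  qed
  fix x assume "x \<in> br (quot L I) (coset L I g) (coset L I h)"
  then show "x \<in> coset L I (br L g h)"
    unfolding quot_def coset_def using br_shift by auto
next
  fix x assume "x \<in> coset L I (br L g h)"
  then show "x \<in> br (quot L I) (coset L I g) (coset L I h)"
    unfolding quot_def using coset_self[OF I g] coset_self[OF I h] unfolding coset_def by auto
qed

end

section \<open>Capability as an epimorphism with kernel the centre\<close>

definition center_quotient_map :: "('f::field, 'a) lsa \<Rightarrow> ('f, 'b) lsa \<Rightarrow> ('a \<Rightarrow> 'b) \<Rightarrow> bool" where
  "center_quotient_map L M \<psi> \<longleftrightarrow>
     (\<forall>x\<in>carr L. \<forall>y\<in>carr L.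
        \<psi> (ad L x y) = ad M (\<psi> x) (\<psi> y) \<and> \<psi> (br L x y) = br M (\<psi> x) (\<psi> y)) \<and>
     (\<forall>c. \<forall>x\<in>carr L. \<psi> (sm L c x) = sm M c (\<psi> x)) \<and>
     \<psi> ` carr L = carr M \<and> \<psi> ` evp L = evp M \<and> \<psi> ` oddp L = oddp M \<and>
     (\<forall>u\<in>carr L. \<psi> u = zr M \<longleftrightarrow> u \<in> center L)"

lemma center_quotient_mapD:
  assumes "center_quotient_map L M \<psi>"
  shows "x \<in> carr L \<Longrightarrow> y \<in> carr L \<Longrightarrow> \<psi> (ad L x y) = ad M (\<psi> x) (\<psi> y)"
    and "x \<in> carr L \<Longrightarrow> y \<in> carr L \<Longrightarrow> \<psi> (br L x y) = br M (\<psi> x) (\<psi> y)"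
    and "x \<in> carr L \<Longrightarrow> \<psi> (sm L c x) = sm M c (\<psi> x)"
    and "\<psi> ` carr L = carr M" and "\<psi> ` evp L = evp M" and "\<psi> ` oddp L = oddp M"
    and "u \<in> carr L \<Longrightarrow> \<psi> u = zr M \<longleftrightarrow> u \<in> center L"
  using assms unfolding center_quotient_map_def by ((elim conjE)?, meson)+

context lie_sa
begin

lemma center_quotient_map_of_iso:
  assumes M: "vector_space_on M" and iso: "lsa_iso (quot L (center L)) M f"
  shows "center_quotient_map L M (f \<circ> coset L (center L))"
proof -
  interpret M: lsa_vector_space M by (rule lsa_vector_space.intro[OF M])
  let ?Q = "quot L (center L)" and ?cs = "coset L (center L)"
  have Z: "subspace_of (center L) L" by (rule subspace_center)
  have bij: "bij_betw f (carr ?Q) (carr M)" and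
    f_evp: "f ` evp ?Q = evp M" and f_oddp: "f ` oddp ?Q = oddp M" and
    f_hom: "\<And>A B. A \<in> carr ?Q \<Longrightarrow> B \<in> carr ?Q \<Longrightarrow>
               f (ad ?Q A B) = ad M (f A) (f B) \<and> f (br ?Q A B) = br M (f A) (f B)" and
    f_sm: "\<And>c A. A \<in> carr ?Q \<Longrightarrow> f (sm ?Q c A) = sm M c (f A)"
    using iso unfolding lsa_iso_def by ((elim conjE)?, meson)+
  have cs_carr: "?cs g \<in> carr ?Q" if "g \<in> carr L" for g
    using that by (simp add: quot_def)
  have f_zero: "f (?cs (zr L)) = zr M"
  proof (rule M.ad_self_eq_imp_zero)
    show "f (?cs (zr L)) \<in> carr M" using bij cs_carr[OF zr_closed] by (auto dest: bij_betwE)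
    show "ad M (f (?cs (zr L))) (f (?cs (zr L))) = f (?cs (zr L))"
      using f_hom[OF cs_carr cs_carr, of "zr L" "zr L"] quot_ad_coset[OF Z zr_closed zr_closed] by simp
  qed
  have kernel: "f (?cs u) = zr M \<longleftrightarrow> u \<in> center L" if u: "u \<in> carr L" for u
  proof -
    have "f (?cs u) = f (?cs (zr L)) \<longleftrightarrow> ?cs u = ?cs (zr L)"
      using bij_betw_imp_inj_on[OF bij] cs_carr[OF u] cs_carr[OF zr_closed] by (rule inj_on_eq_iff)
    then show ?thesis using f_zero coset_zero[OF Z] coset_eq_zero_iff[OF Z u] by simp
  qed
  have images: "(f \<circ> ?cs) ` S = f ` (?cs ` S)" for S by (simp add: image_comp)
  show ?thesis
    unfolding center_quotient_map_def images
    using f_hom[OF cs_carr cs_carr] f_sm[OF cs_carr] kernel bij f_evp f_oddp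
      quot_ad_coset[OF Z] quot_br_coset[OF Z order_refl] quot_sm_coset[OF Z]
    by (simp add: bij_betw_def quot_def)
qed

lemma iso_of_center_quotient_map:
  assumes M: "vector_space_on M" and \<psi>: "center_quotient_map L M \<psi>"
  shows "lsa_iso (quot L (center L)) M (\<lambda>A. \<psi> (SOME a. a \<in> A))"
proof -
  interpret M: lsa_vector_space M by (rule lsa_vector_space.intro[OF M])
  let ?Q = "quot L (center L)" and ?cs = "coset L (center L)" and ?f = "\<lambda>A. \<psi> (SOME a. a \<in> A)"
  have Z: "subspace_of (center L) L" by (rule subspace_center)
  have \<psi>_ad: "\<And>x y. x \<in> carr L \<Longrightarrow> y \<in> carr L \<Longrightarrow> \<psi> (ad L x y) = ad M (\<psi> x) (\<psi> y)" and
    \<psi>_br: "\<And>x y. x \<in> carr L \<Longrightarrow> y \<in> carr L \<Longrightarrow> \<psi> (br L x y) = br M (\<psi> x) (\<psi> y)" and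
    \<psi>_sm: "\<And>c x. x \<in> carr L \<Longrightarrow> \<psi> (sm L c x) = sm M c (\<psi> x)" and
    \<psi>_carr: "\<psi> ` carr L = carr M" and \<psi>_evp: "\<psi> ` evp L = evp M" and \<psi>_oddp: "\<psi> ` oddp L = oddp M" and
    kernel: "\<And>u. u \<in> carr L \<Longrightarrow> \<psi> u = zr M \<longleftrightarrow> u \<in> center L"
    using center_quotient_mapD[OF \<psi>] by blast+
  have f_coset: "?f (?cs g) = \<psi> g" if g: "g \<in> carr L" for g
  proof -
    obtain i where i: "i \<in> center L" and "(SOME a. a \<in> ?cs g) = ad L g i"
      using someI[of "\<lambda>a. a \<in> ?cs g", OF coset_self[OF Z g]] unfolding coset_def by blast
    moreover have "\<psi> g \<in> carr M" using g \<psi>_carr by blast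
    ultimately show ?thesis
      using g \<psi>_ad kernel[OF center_carr[OF i]] i center_carr by simp
  qed
  have inj: "?cs g = ?cs h" if g: "g \<in> carr L" and h: "h \<in> carr L" and eq: "\<psi> g = \<psi> h" for g h
  proof -
    let ?d = "ad L g (sm L (- 1) h)"
    have "\<psi> h \<in> carr M" using h \<psi>_carr by blast
    then have "\<psi> ?d = zr M"
      using g h eq \<psi>_ad \<psi>_sm by simp
    then have "?d \<in> center L" using kernel g h by simp
    moreover have "g = ad L h ?d"
      using g h ad_left_commute[OF h g sm_closed[OF h]] by simp
    ultimately have "g \<in> ?cs h" unfolding coset_def by blast
    then show ?thesis using coset_eq_if_mem[OF Z h] by simp
  qed
  have image_f: "?f ` (?cs ` S) = \<psi> ` S" if "S \<subseteq> carr L" for S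
    using that f_coset by (force simp: image_comp)
  have quot_carrE: "\<And>A. A \<in> carr ?Q \<Longrightarrow> \<exists>g\<in>carr L. A = ?cs g" by (auto simp: quot_def)
  show ?thesis
    unfolding lsa_iso_def bij_betw_def
  proof (intro conjI ballI allI)
    show "inj_on ?f (carr ?Q)"
    proof (rule inj_onI)
      fix A B assume "A \<in> carr ?Q" "B \<in> carr ?Q" and eq: "?f A = ?f B"
      then obtain g h where "g \<in> carr L" "A = ?cs g" "h \<in> carr L" "B = ?cs h"
        using quot_carrE by blast
      then show "A = B" using inj[of g h] eq f_coset by simp
    qed
    show "?f ` carr ?Q = carr M" "?f ` evp ?Q = evp M" "?f ` oddp ?Q = oddp M"
      using image_f \<psi>_carr \<psi>_evp \<psi>_oddp by (auto simp: quot_def evp_carr oddp_carr subsetI)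
    fix A B c assume "A \<in> carr ?Q" "B \<in> carr ?Q"
    then obtain g h where g: "g \<in> carr L" "A = ?cs g" and h: "h \<in> carr L" "B = ?cs h"
      using quot_carrE by blast
    show "?f (ad ?Q A B) = ad M (?f A) (?f B)" "?f (br ?Q A B) = br M (?f A) (?f B)"
      "?f (sm ?Q c A) = sm M c (?f A)"
      using g h quot_ad_coset[OF Z] quot_br_coset[OF Z order_refl] quot_sm_coset[OF Z]
        f_coset \<psi>_ad \<psi>_br \<psi>_sm by simp_all
  qed
qed

end

lemma capable_in_iff_center_quotient_map:
  assumes "vector_space_on M"
  shows "capable_in TYPE('h) M \<longleftrightarrow>
         (\<exists>(L :: ('f::field, 'h) lsa) \<psi>. lie_superalgebra L \<and> center_quotient_map L M \<psi>)"
  unfolding capable_in_def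
  using lie_sa.center_quotient_map_of_iso lie_sa.iso_of_center_quotient_map lie_sa.intro assms
  by metis

section \<open>The Heisenberg superalgebra H_m\<close>

definition heis_x :: "nat \<Rightarrow> (nat \<Rightarrow> 'f::field) \<times> (nat \<Rightarrow> 'f) \<times> 'f" where
  "heis_x k = ((\<lambda>j. of_bool (j = k)), (\<lambda>_. 0), 0)"

definition heis_y :: "nat \<Rightarrow> (nat \<Rightarrow> 'f::field) \<times> (nat \<Rightarrow> 'f) \<times> 'f" where
  "heis_y k = ((\<lambda>_. 0), (\<lambda>j. of_bool (j = k)), 0)"

definition heis_z :: "'f::field \<Rightarrow> (nat \<Rightarrow> 'f) \<times> (nat \<Rightarrow> 'f) \<times> 'f" where
  "heis_z c = ((\<lambda>_. 0), (\<lambda>_. 0), c)"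

lemma vector_space_on_heis: "vector_space_on (heis m)"
proof -
  have inverse: "\<exists>y\<in>carr (heis m). ad (heis m) x y = zr (heis m)" if "x \<in> carr (heis m)" for x
    using that by (intro bexI[of _ "sm (heis m) (- 1) x"]) (auto simp: heis_def split: prod.splits)
  show ?thesis
    unfolding vector_space_on_def by (intro conjI ballI inverse) (auto simp: heis_def algebra_simps)
qed

lemma heis_zr: "zr (heis m) = heis_z 0"
  by (simp add: heis_def heis_z_def)

lemma heis_z_eq_iff [simp]: "heis_z c = heis_z d \<longleftrightarrow> c = d"
  by (simp add: heis_z_def)

lemma heis_ad_z [simp]: "ad (heis m) (heis_z c) (heis_z d) = heis_z (c + d)"
  and heis_sm_z [simp]: "sm (heis m) c (heis_z d) = heis_z (c * d)"
  by (simp_all add: heis_def heis_z_def)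

lemma heis_br_in_z_line: "\<exists>c. br (heis m) p q = heis_z c"
  by (cases p; cases q) (simp add: heis_def heis_z_def)

lemma heis_br_x_y: "1 \<le> i \<Longrightarrow> i \<le> m \<Longrightarrow> br (heis m) (heis_x i) (heis_y j) = heis_z (of_bool (i = j))"
  and heis_br_y_x: "1 \<le> i \<Longrightarrow> i \<le> m \<Longrightarrow> br (heis m) (heis_y j) (heis_x i) = heis_z (- of_bool (i = j))"
  and heis_br_x_x: "br (heis m) (heis_x i) (heis_x j) = heis_z 0"
  and heis_br_y_y: "br (heis m) (heis_y i) (heis_y j) = heis_z 0"
  by (simp_all add: heis_def heis_x_def heis_y_def heis_z_def sum.delta sum_negf del: sum_of_bool_eq)

lemma heis_x_evp: "1 \<le> k \<Longrightarrow> k \<le> m \<Longrightarrow> heis_x k \<in> evp (heis m)"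
  and heis_y_oddp: "1 \<le> k \<Longrightarrow> k \<le> m \<Longrightarrow> heis_y k \<in> oddp (heis m)"
  by (auto simp: heis_def heis_x_def heis_y_def)

section \<open>H_m is not capable for m \<ge> 2\<close>

locale heis_center_quotient = lie_sa L for L :: "('f::field, 'a) lsa" +
  fixes m :: nat and \<psi> :: "'a \<Rightarrow> (nat \<Rightarrow> 'f) \<times> (nat \<Rightarrow> 'f) \<times> 'f"
  assumes center_quotient_map: "center_quotient_map L (heis m) \<psi>"
begin

lemma \<psi>_ad: "x \<in> carr L \<Longrightarrow> y \<in> carr L \<Longrightarrow> \<psi> (ad L x y) = ad (heis m) (\<psi> x) (\<psi> y)"
  and \<psi>_br: "x \<in> carr L \<Longrightarrow> y \<in> carr L \<Longrightarrow> \<psi> (br L x y) = br (heis m) (\<psi> x) (\<psi> y)"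
  and \<psi>_sm: "x \<in> carr L \<Longrightarrow> \<psi> (sm L c x) = sm (heis m) c (\<psi> x)"
  and \<psi>_evp: "\<psi> ` evp L = evp (heis m)"
  and \<psi>_oddp: "\<psi> ` oddp L = oddp (heis m)"
  and \<psi>_eq_zero_iff: "u \<in> carr L \<Longrightarrow> \<psi> u = heis_z 0 \<longleftrightarrow> u \<in> center L"
  using center_quotient_mapD[OF center_quotient_map] by (simp_all add: heis_zr)

lemma br_center_if_image_br_zero:
  "u \<in> carr L \<Longrightarrow> v \<in> carr L \<Longrightarrow> br (heis m) (\<psi> u) (\<psi> v) = heis_z 0 \<Longrightarrow> br L u v \<in> center L"
  by (simp add: \<psi>_br flip: \<psi>_eq_zero_iff)

lemma z_line_preimage:
  assumes w: "w \<in> carr L" "\<psi> w = heis_z 1" and u: "u \<in> carr L" "\<psi> u = heis_z c"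
  obtains i where "i \<in> center L" "u = ad L (sm L c w) i"
proof
  let ?i = "ad L (sm L (- c) w) u"
  show "?i \<in> center L"
    using w u by (simp add: \<psi>_ad \<psi>_sm flip: \<psi>_eq_zero_iff)
  have "ad L (sm L c w) ?i = ad L (ad L (sm L c w) (sm L (- c) w)) u"
    using w u by (simp add: ad_assoc)
  also have "\<dots> = u"
    using w u by (simp flip: sm_plus)
  finally show "u = ad L (sm L c w) ?i" ..
qed

text \<open>All brackets map into the line of z, so they are multiples of w modulo the centre.\<close>
lemma br_br_zero_if_br_z_preimage_zero:
  assumes x: "x \<in> carr L" and w: "w \<in> carr L" "\<psi> w = heis_z 1" and xw: "br L x w = zr L"
    and a: "a \<in> carr L" and b: "b \<in> carr L"
  shows "br L x (br L a b) = zr L"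
proof -
  obtain c where "\<psi> (br L a b) = heis_z c"
    using heis_br_in_z_line \<psi>_br[OF a b] by metis
  then obtain i where i: "i \<in> center L" and "br L a b = ad L (sm L c w) i"
    using z_line_preimage[OF w] a b by (metis br_closed)
  then show ?thesis
    using x w(1) xw br_center_right[OF x i] center_carr[OF i]
    by (simp add: br_linear_right)
qed

definition lifts_basis :: "nat \<Rightarrow> 'a \<Rightarrow> 'a \<Rightarrow> bool" where
  "lifts_basis k x y \<longleftrightarrow> 1 \<le> k \<and> k \<le> m \<and> x \<in> evp L \<and> y \<in> oddp L \<and> \<psi> x = heis_x k \<and> \<psi> y = heis_y k"

lemma lifts_basis_exists:
  assumes "1 \<le> k" "k \<le> m"
  obtains x y where "lifts_basis k x y"
proof -
  obtain x where "x \<in> evp L" "\<psi> x = heis_x k"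
    using heis_x_evp[OF assms] \<psi>_evp by (metis imageE)
  moreover obtain y where "y \<in> oddp L" "\<psi> y = heis_y k"
    using heis_y_oddp[OF assms] \<psi>_oddp by (metis imageE)
  ultimately show ?thesis
    using assms that unfolding lifts_basis_def by blast
qed

lemma lifts_basisD:
  assumes "lifts_basis k x y"
  shows "x \<in> carr L" "y \<in> carr L" "hom L x False" "hom L y True" "\<psi> (br L x y) = heis_z 1"
  using assms unfolding lifts_basis_def
  by (auto simp: evp_carr oddp_carr hom_evp hom_oddp \<psi>_br heis_br_x_y)

lemma br_lift_commutator_zero:
  assumes i: "lifts_basis i x y" and j: "lifts_basis j x' y'" and ij: "i \<noteq> j"
  shows "br L x (br L x' y') = zr L" "br L y (br L x' y') = zr L"
proof -
  note i' = lifts_basisD[OF i] and j' = lifts_basisD[OF j]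
  have central: "br L y' x \<in> center L" "br L x x' \<in> center L"
    "br L y' y \<in> center L" "br L y x' \<in> center L"
    using i j ij unfolding lifts_basis_def
    by (auto intro!: br_center_if_image_br_zero simp: evp_carr oddp_carr heis_br_x_x heis_br_y_y
          heis_br_x_y heis_br_y_x)
  show "br L x (br L x' y') = zr L"
    using jacobi[OF i'(3) j'(3) j'(4)] i' j' br_center_right central
    by (simp add: sgn2_def)
  have "sm L (- 1) (br L y (br L x' y')) = zr L"
    using jacobi[OF i'(4) j'(3) j'(4)] i' j' br_center_right central
    by (simp add: sgn2_def)
  then show "br L y (br L x' y') = zr L"
    using i' j' by (simp add: sm_eq_zero_iff)
qed

lemma lift_commutator_central:
  assumes i: "lifts_basis i x y" and j: "lifts_basis j x' y'" and ij: "i \<noteq> j"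
  shows "br L x y \<in> center L"
proof (rule center_if_br_hom_zero)
  note i' = lifts_basisD[OF i] and j' = lifts_basisD[OF j]
  show "hom L (br L x y) True" using hom_br[OF i'(3,4)] by simp
  fix t e assume t: "hom L t e"
  have tc: "t \<in> carr L" using t by (rule hom_carr)
  note kills_w = br_lift_commutator_zero[OF i j ij]
  have w: "br L x' y' \<in> carr L" using j' by simp
  have "br L x (br L y t) = zr L" "br L y (br L t x) = zr L"
    using br_br_zero_if_br_z_preimage_zero[OF _ w j'(5)] kills_w i' tc by simp_all
  then have "sm L (sgn2 e True) (br L t (br L x y)) = zr L"
    using jacobi[OF t i'(3,4)] i' tc by (simp add: sgn2_def)
  then show "br L t (br L x y) = zr L"
    using i' tc by (simp add: sm_eq_zero_iff)
qed

lemma m_le_one: "m \<le> 1"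
proof (rule ccontr)
  assume "\<not> m \<le> 1"
  then have m: "2 \<le> m" by simp
  obtain x y where i: "lifts_basis 1 x y" using lifts_basis_exists[of 1] m by force
  obtain x' y' where j: "lifts_basis 2 x' y'" using lifts_basis_exists[of 2] m by force
  have "\<psi> (br L x y) = heis_z 0"
    using lift_commutator_central[OF i j] lifts_basisD(1,2)[OF i] \<psi>_eq_zero_iff by simp
  then show False using lifts_basisD(5)[OF i] by simp
qed

end

section \<open>H_1 is capable\<close>

text \<open>Basis x (even, coordinate 0) and y, z, w (odd, coordinates 1, 2, 3), with [x, y] = z and
  [x, z] = w.\<close>
definition heis1_cover :: "('f::field, nat \<Rightarrow> 'f) lsa" where
  "heis1_cover = \<lparr> carr = {g. \<forall>n\<ge>4. g n = 0},
                   evp = {g. \<forall>n. n \<noteq> 0 \<longrightarrow> g n = 0},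
                   oddp = {g. g 0 = 0 \<and> (\<forall>n\<ge>4. g n = 0)},
                   zr = (\<lambda>_. 0),
                   ad = (\<lambda>g h n. g n + h n),
                   sm = (\<lambda>c g n. c * g n),
                   br = (\<lambda>g h n. if n = 2 then g 0 * h 1 - g 1 * h 0
                                 else if n = 3 then g 0 * h 2 - g 2 * h 0 else 0) \<rparr>"

lemma heis1_cover_simps:
  "carr heis1_cover = {g. \<forall>n\<ge>4. g n = 0}"
  "evp heis1_cover = {g. \<forall>n. n \<noteq> 0 \<longrightarrow> g n = 0}"
  "oddp heis1_cover = {g. g 0 = 0 \<and> (\<forall>n\<ge>4. g n = 0)}"
  "zr heis1_cover = (\<lambda>_. 0)"
  "ad heis1_cover = (\<lambda>g h n. g n + h n)"
  "sm heis1_cover = (\<lambda>c g n. c * g n)"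
  "br heis1_cover = (\<lambda>g h n. if n = 2 then g 0 * h 1 - g 1 * h 0
                             else if n = 3 then g 0 * h 2 - g 2 * h 0 else 0)"
  by (simp_all add: heis1_cover_def)

lemma lie_superalgebra_heis1_cover: "lie_superalgebra (heis1_cover :: ('f::field, _) lsa)"
  unfolding lie_superalgebra_def
proof (intro conjI)
  have inverse: "\<exists>h\<in>carr heis1_cover. ad heis1_cover g h = zr heis1_cover"
    if "g \<in> carr (heis1_cover :: ('f, _) lsa)" for g
    using that by (intro bexI[of _ "sm heis1_cover (- 1) g"]) (auto simp: heis1_cover_simps)
  show "vector_space_on (heis1_cover :: ('f, _) lsa)"
    unfolding vector_space_on_def
    by (intro conjI ballI inverse) (auto simp: heis1_cover_simps algebra_simps)
  show "carr (heis1_cover :: ('f, _) lsa) =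
        {ad heis1_cover a b |a b. a \<in> evp heis1_cover \<and> b \<in> oddp heis1_cover}"
  proof (intro set_eqI iffI)
    fix g :: "nat \<Rightarrow> 'f" assume "g \<in> carr heis1_cover"
    moreover have "g = ad heis1_cover (\<lambda>n. if n = 0 then g 0 else 0) (\<lambda>n. if n = 0 then 0 else g n)"
      by (simp add: heis1_cover_simps fun_eq_iff)
    ultimately show "g \<in> {ad heis1_cover a b |a b. a \<in> evp heis1_cover \<and> b \<in> oddp heis1_cover}"
      unfolding heis1_cover_simps by fastforce
  qed (auto simp: heis1_cover_simps)
  show "evp heis1_cover \<inter> oddp heis1_cover = {zr (heis1_cover :: ('f, _) lsa)}"
    unfolding heis1_cover_simps by (auto simp: fun_eq_iff) (metis neq0_conv)
qed (unfold subspace_of_def hom_def sgn2_def heis1_cover_simps, auto simp: fun_eq_iff algebra_simps)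

lemma center_heis1_cover:
  "center (heis1_cover :: ('f::field, _) lsa) = {g \<in> carr heis1_cover. g 0 = 0 \<and> g 1 = 0 \<and> g 2 = 0}"
proof (intro set_eqI iffI)
  fix g :: "nat \<Rightarrow> 'f" assume "g \<in> center heis1_cover"
  then have g: "g \<in> carr heis1_cover" and kills: "\<And>h. h \<in> carr heis1_cover \<Longrightarrow> br heis1_cover g h = (\<lambda>_. 0)"
    unfolding center_def heis1_cover_simps by auto
  have e0: "br heis1_cover g (\<lambda>n. of_bool (n = 0)) = (\<lambda>_. 0)"
    and e1: "br heis1_cover g (\<lambda>n. of_bool (n = 1)) = (\<lambda>_. 0)"
    by (intro kills; simp add: heis1_cover_simps)+
  have "g 1 = 0" "g 2 = 0" "g 0 = 0"
    using fun_cong[OF e0, of 2] fun_cong[OF e0, of 3] fun_cong[OF e1, of 2]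
    by (simp_all add: heis1_cover_simps)
  then show "g \<in> {g \<in> carr heis1_cover. g 0 = 0 \<and> g 1 = 0 \<and> g 2 = 0}"
    using g by simp
qed (auto simp: center_def heis1_cover_simps fun_eq_iff)

lemma heis1_simps:
  "carr (heis 1) = {(a, b, c). \<forall>j. j \<noteq> 1 \<longrightarrow> a j = 0 \<and> b j = 0}"
  "evp (heis 1) = {(a, b, c). (\<forall>j. j \<noteq> 1 \<longrightarrow> a j = 0) \<and> (\<forall>j. b j = 0) \<and> c = (0::'f::field)}"
  "oddp (heis 1) = {(a, b, c). (\<forall>j. a j = 0) \<and> (\<forall>j. j \<noteq> 1 \<longrightarrow> b j = (0::'f))}"
  unfolding heis_def nat_neq_iff by simp_all

definition heis1_cover_proj :: "(nat \<Rightarrow> 'f::field) \<Rightarrow> (nat \<Rightarrow> 'f) \<times> (nat \<Rightarrow> 'f) \<times> 'f" where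
  "heis1_cover_proj g = ((\<lambda>j. of_bool (j = 1) * g 0), (\<lambda>j. of_bool (j = 1) * g 1), g 2)"

definition heis1_cover_lift :: "(nat \<Rightarrow> 'f) \<times> (nat \<Rightarrow> 'f) \<times> 'f \<Rightarrow> nat \<Rightarrow> 'f::field" where
  "heis1_cover_lift = (\<lambda>(a, b, c) n. if n = 0 then a 1 else if n = 1 then b 1 else if n = 2 then c else 0)"

lemma image_eq_if_right_inverse:
  assumes "\<And>x. x \<in> S \<Longrightarrow> f x \<in> T" and "\<And>y. y \<in> T \<Longrightarrow> g y \<in> S \<and> f (g y) = y"
  shows "f ` S = T"
  using assms by force

lemma center_quotient_map_heis1_cover:
  "center_quotient_map heis1_cover (heis 1 :: ('f::field, _) lsa) heis1_cover_proj"
  unfolding center_quotient_map_def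
proof (intro conjI ballI allI image_eq_if_right_inverse[where g = heis1_cover_lift])
  show "heis1_cover_proj (ad heis1_cover x y) = ad (heis 1) (heis1_cover_proj x) (heis1_cover_proj y)"
    "heis1_cover_proj (br heis1_cover x y) = br (heis 1) (heis1_cover_proj x) (heis1_cover_proj y)"
    "heis1_cover_proj (sm heis1_cover c x) = sm (heis 1 :: ('f, _) lsa) c (heis1_cover_proj x)"
    for x y :: "nat \<Rightarrow> 'f" and c
    by (simp_all add: heis1_cover_proj_def heis1_cover_simps heis_def fun_eq_iff algebra_simps)
  show "heis1_cover_proj u = zr (heis 1) \<longleftrightarrow> u \<in> center heis1_cover"
    if "u \<in> carr (heis1_cover :: ('f, _) lsa)" for u
    using that by (auto simp: heis1_cover_proj_def heis_def center_heis1_cover fun_eq_iff)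
qed (unfold heis1_simps, auto simp: heis1_cover_proj_def heis1_cover_lift_def heis1_cover_simps)

theorem mainTheorem5:
  fixes m :: nat
  assumes "(2::'f::field) \<noteq> 0" and "(3::'f) \<noteq> 0" and "m \<ge> 1"
  shows "(capable_in TYPE('h) (heis m :: ('f, _) lsa) \<longrightarrow> m = 1) \<and>
         (m = 1 \<longrightarrow> capable_in TYPE(nat \<Rightarrow> 'f) (heis m :: ('f, _) lsa))"
proof (intro conjI impI)
  assume "capable_in TYPE('h) (heis m :: ('f, _) lsa)"
  then obtain L :: "('f, 'h) lsa" and \<psi> where "lie_superalgebra L" "center_quotient_map L (heis m) \<psi>"
    using capable_in_iff_center_quotient_map[OF vector_space_on_heis] by blast
  then have "m \<le> 1"
    by (intro heis_center_quotient.m_le_one heis_center_quotient.intro lie_sa.intro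
        heis_center_quotient_axioms.intro)
  with \<open>m \<ge> 1\<close> show "m = 1" by simp
next
  assume "m = 1"
  then show "capable_in TYPE(nat \<Rightarrow> 'f) (heis m :: ('f, _) lsa)"
    using capable_in_iff_center_quotient_map[OF vector_space_on_heis]
      lie_superalgebra_heis1_cover center_quotient_map_heis1_cover by blast
qed

end
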